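(* Let $D$ be a digraph with $\chi(D)>\omega$. Then there is a subdigraph $D_0\subseteq D$ with $\chi(D_0)>\omega$ such that every vertex of $D_0$ has infinite in-degree and infinite out-degree in $D_0$.
   Context: A digraph is a pair $D=(V,E)$ with $E\subseteq V^2$ such that $uv\in E$ implies $vu\notin E$. The dichromatic number $\chi(D)$ is the minimal number of acyclic vertex sets (sets inducing no directed cycle) needed to cover the vertex set of $D$. *)

theory Defs
  imports Main "HOL-Library.Countable_Set"
begin

definition digraph :: "'a set \<Rightarrow> ('a \<times> 'a) set \<Rightarrow> bool" where
  "digraph V E \<longleftrightarrow> E \<subseteq> V \<times> V \<and> (\<forall>u v. (u, v) \<in> E \<longrightarrow> (v, u) \<notin> E)"

definition acyclic_set :: "'a set \<Rightarrow> ('a \<times> 'a) set \<Rightarrow> 'a set \<Rightarrow> bool" where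
  "acyclic_set V E A \<longleftrightarrow> A \<subseteq> V \<and> acyclic (E \<inter> (A \<times> A))"

definition dichromatic_le_omega :: "'a set \<Rightarrow> ('a \<times> 'a) set \<Rightarrow> bool" where
  "dichromatic_le_omega V E \<longleftrightarrow>
     (\<exists>C. countable C \<and> (\<forall>A\<in>C. acyclic_set V E A) \<and> V \<subseteq> \<Union>C)"

definition subdigraph :: "'a set \<Rightarrow> ('a \<times> 'a) set \<Rightarrow> 'a set \<Rightarrow> ('a \<times> 'a) set \<Rightarrow> bool" where
  "subdigraph V0 E0 V E \<longleftrightarrow> digraph V0 E0 \<and> V0 \<subseteq> V \<and> E0 \<subseteq> E"

definition in_nbrs :: "('a \<times> 'a) set \<Rightarrow> 'a \<Rightarrow> 'a set" where
  "in_nbrs E v = {u. (u, v) \<in> E}"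

definition out_nbrs :: "('a \<times> 'a) set \<Rightarrow> 'a \<Rightarrow> 'a set" where
  "out_nbrs E v = {w. (v, w) \<in> E}"

end

(* Let V0 be the union of all vertex sets in which every vertex has infinitely many in- and
   out-neighbours; it is itself such a set. Every nonempty set of the remaining vertices contains a
   vertex with finitely many in- or out-neighbours inside it, so the remaining vertices can be
   eliminated one by one (transfinitely, via Zorn's lemma): they admit a linear order in which every
   vertex has finitely many later out-neighbours or finitely many later in-neighbours. The vertices
   with at most k later out-neighbours induce a k-degenerate digraph, which is acyclically
   (k + 1)-colourable by greedy colouring of its finite parts and compactness; the same holds for
   in-neighbours. Hence the remaining vertices are covered by countably many acyclic sets, and V0
   must carry the uncountable dichromatic number. *)

theory Submission
  imports Defs
begin

lemma trancl_finite_support: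
  assumes "(a, b) \<in> r\<^sup>+"
  shows "\<exists>F. finite F \<and> (a, b) \<in> (r \<inter> F \<times> F)\<^sup>+"
  using assms
proof (induction rule: trancl_induct)
  case (base b)
  then have "(a, b) \<in> (r \<inter> {a, b} \<times> {a, b})\<^sup>+" by (intro r_into_trancl) blast
  moreover have "finite {a, b}" by simp
  ultimately show ?case by meson
next
  case (step b c)
  then obtain F where "finite F" "(a, b) \<in> (r \<inter> F \<times> F)\<^sup>+" by blast
  let ?G = "insert c (insert b F)"
  have "(a, b) \<in> (r \<inter> ?G \<times> ?G)\<^sup>+"
    using \<open>(a, b) \<in> (r \<inter> F \<times> F)\<^sup>+\<close> by (rule trancl_mono) blast
  moreover have "(b, c) \<in> r \<inter> ?G \<times> ?G" using step.hyps(2) by blast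
  ultimately have "(a, c) \<in> (r \<inter> ?G \<times> ?G)\<^sup>+" by (rule trancl_into_trancl)
  moreover have "finite ?G" using \<open>finite F\<close> by simp
  ultimately show ?case by meson
qed

lemma acyclic_if_finite_restrictions_acyclic:
  assumes "\<And>F. finite F \<Longrightarrow> acyclic (r \<inter> F \<times> F)"
  shows "acyclic r"
  unfolding acyclic_def
proof (intro allI notI)
  fix x assume "(x, x) \<in> r\<^sup>+"
  then obtain F where "finite F" "(x, x) \<in> (r \<inter> F \<times> F)\<^sup>+"
    using trancl_finite_support by metis
  then show False using assms unfolding acyclic_def by metis
qed

lemma trancl_avoid_sink:
  assumes "(a, b) \<in> r\<^sup>+" "b \<noteq> v" "\<And>y. (v, y) \<notin> r"
  shows "(a, b) \<in> (r \<inter> (- {v}) \<times> (- {v}))\<^sup>+"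
  using assms(1,2)
proof (induction rule: trancl_induct)
  case (base b)
  then show ?case using assms(3) by blast
next
  case (step b c)
  then have "b \<noteq> v" using assms(3) by blast
  then show ?case using step by (blast intro: trancl_into_trancl)
qed

lemma acyclic_add_sink:
  assumes "acyclic (r \<inter> (- {v}) \<times> (- {v}))" "\<And>y. (v, y) \<notin> r"
  shows "acyclic r"
  unfolding acyclic_def
proof (intro allI notI)
  fix x assume "(x, x) \<in> r\<^sup>+"
  moreover have "x \<noteq> v" using \<open>(x, x) \<in> r\<^sup>+\<close> assms(2) by (meson tranclD)
  ultimately show False using trancl_avoid_sink assms unfolding acyclic_def by metis
qed

definition acyclic_colouring :: "('a \<times> 'a) set \<Rightarrow> 'a set \<Rightarrow> ('a \<Rightarrow> nat) \<Rightarrow> bool" where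
  "acyclic_colouring E F c \<longleftrightarrow> (\<forall>j. acyclic (E \<inter> {x \<in> F. c x = j} \<times> {x \<in> F. c x = j}))"

lemma acyclic_colouring_subset:
  assumes "acyclic_colouring E F c" "G \<subseteq> F"
  shows "acyclic_colouring E G c"
  using assms unfolding acyclic_colouring_def by (blast intro: acyclic_subset)

lemma acyclic_colouring_cong:
  assumes "acyclic_colouring E F c" "\<And>x. x \<in> F \<Longrightarrow> c' x = c x"
  shows "acyclic_colouring E F c'"
proof -
  have "{x \<in> F. c' x = j} = {x \<in> F. c x = j}" for j using assms(2) by auto
  then show ?thesis using assms(1) unfolding acyclic_colouring_def by simp
qed

lemma acyclic_colouring_finite_character:
  assumes "\<And>G. finite G \<Longrightarrow> G \<subseteq> F \<Longrightarrow> acyclic_colouring E G c"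
  shows "acyclic_colouring E F c"
  unfolding acyclic_colouring_def
proof
  fix j
  show "acyclic (E \<inter> {x \<in> F. c x = j} \<times> {x \<in> F. c x = j})"
  proof (rule acyclic_if_finite_restrictions_acyclic)
    fix G :: "'a set" assume "finite G"
    have "acyclic_colouring E (F \<inter> G) c" using assms \<open>finite G\<close> by blast
    then have "acyclic (E \<inter> {x \<in> F \<inter> G. c x = j} \<times> {x \<in> F \<inter> G. c x = j})"
      unfolding acyclic_colouring_def by blast
    then show "acyclic (E \<inter> {x \<in> F. c x = j} \<times> {x \<in> F. c x = j} \<inter> G \<times> G)"
      by (rule acyclic_subset) blast
  qed
qed

text \<open>Colour the vertex of small out-degree last, avoiding the colours of its out-neighbours:
  having no out-neighbour in its own colour class, it lies on no monochromatic cycle.\<close>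
lemma degenerate_acyclic_colouring:
  assumes loopfree: "\<And>v. (v, v) \<notin> E" and "finite F"
    and degenerate: "\<And>G. G \<subseteq> F \<Longrightarrow> G \<noteq> {} \<Longrightarrow> \<exists>v\<in>G. card (out_nbrs E v \<inter> G) \<le> k"
  shows "\<exists>c. c ` F \<subseteq> {..k} \<and> acyclic_colouring E F c"
  using \<open>finite F\<close>
proof (induction F rule: finite_remove_induct)
  case empty
  then show ?case by (simp add: acyclic_colouring_def acyclic_def)
next
  case (remove G)
  then obtain v where "v \<in> G" and small: "card (out_nbrs E v \<inter> G) \<le> k"
    using degenerate by blast
  then obtain c' where c': "c' ` (G - {v}) \<subseteq> {..k}" "acyclic_colouring E (G - {v}) c'"
    using remove.IH by blast
  let ?N = "out_nbrs E v \<inter> G"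
  have "card (c' ` ?N) < card {..k}"
    using small card_image_le[of ?N c'] \<open>finite G\<close> by simp
  then obtain j where "j \<le> k" "j \<notin> c' ` ?N"
    by (metis atMost_iff card_mono finite_imageI \<open>finite G\<close> finite_Int not_le subsetI)
  define c where "c = c'(v := j)"
  have "acyclic (E \<inter> {x \<in> G. c x = i} \<times> {x \<in> G. c x = i})" for i
  proof (cases "i = j")
    case True
    have "E \<inter> {x \<in> G. c x = i} \<times> {x \<in> G. c x = i} \<inter> (- {v}) \<times> (- {v})
        = E \<inter> {x \<in> G - {v}. c' x = j} \<times> {x \<in> G - {v}. c' x = j}"
      using True by (auto simp: c_def)
    moreover have "(v, y) \<notin> E \<inter> {x \<in> G. c x = i} \<times> {x \<in> G. c x = i}" for y
      using loopfree \<open>j \<notin> c' ` ?N\<close> True by (auto simp: c_def out_nbrs_def)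
    ultimately show ?thesis
      using c'(2) acyclic_add_sink unfolding acyclic_colouring_def by metis
  next
    case False
    then have "{x \<in> G. c x = i} = {x \<in> G - {v}. c' x = i}" by (auto simp: c_def)
    then show ?thesis using c'(2) unfolding acyclic_colouring_def by simp
  qed
  moreover have "c ` G \<subseteq> {..k}" using c' \<open>j \<le> k\<close> by (auto simp: c_def)
  ultimately show ?case unfolding acyclic_colouring_def by blast
qed

text \<open>Partial colourings, as sets of pairs, all of whose finite parts extend to good colourings
  of finite sets; Zorn's lemma yields a maximal one, which turns out to be total.\<close>
definition finitely_extendable ::
    "('a set \<Rightarrow> ('a \<Rightarrow> nat) \<Rightarrow> bool) \<Rightarrow> nat \<Rightarrow> 'a set \<Rightarrow> ('a \<times> nat) set \<Rightarrow> bool" where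
  "finitely_extendable P k L p \<longleftrightarrow> p \<subseteq> L \<times> {..k} \<and> single_valued p \<and>
     (\<forall>F. finite F \<longrightarrow> F \<subseteq> L \<longrightarrow>
        (\<exists>c. c ` F \<subseteq> {..k} \<and> P F c \<and> (\<forall>x j. x \<in> F \<longrightarrow> (x, j) \<in> p \<longrightarrow> c x = j)))"

lemma finitely_extendable_subset: "finitely_extendable P k L p \<Longrightarrow> p \<subseteq> L \<times> {..k}"
  by (simp add: finitely_extendable_def)

lemma finitely_extendable_single_valued: "finitely_extendable P k L p \<Longrightarrow> single_valued p"
  by (simp add: finitely_extendable_def)

lemma finitely_extendableI:
  assumes "p \<subseteq> L \<times> {..k}" "single_valued p"
    and "\<And>F. finite F \<Longrightarrow> F \<subseteq> L \<Longrightarrow>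
           \<exists>c. c ` F \<subseteq> {..k} \<and> P F c \<and> (\<forall>x j. x \<in> F \<longrightarrow> (x, j) \<in> p \<longrightarrow> c x = j)"
  shows "finitely_extendable P k L p"
  using assms unfolding finitely_extendable_def by blast

lemma finitely_extendableD:
  assumes "finitely_extendable P k L p" "finite F" "F \<subseteq> L"
  obtains c where "c ` F \<subseteq> {..k}" "P F c" "\<And>x j. x \<in> F \<Longrightarrow> (x, j) \<in> p \<Longrightarrow> c x = j"
  using assms unfolding finitely_extendable_def by meson

lemma finitely_extendable_Union_chain:
  assumes "C \<in> chains {p. finitely_extendable P k L p}" "finitely_extendable P k L {}"
  shows "finitely_extendable P k L (\<Union>C)"
proof (cases "C = {}")
  case True
  then show ?thesis using assms(2) by simp
next
  case False
  have ext: "\<And>p. p \<in> C \<Longrightarrow> finitely_extendable P k L p"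
    and chain: "\<And>p q. p \<in> C \<Longrightarrow> q \<in> C \<Longrightarrow> p \<subseteq> q \<or> q \<subseteq> p"
    using assms(1) by (auto dest: chainsD chainsD2)
  have "\<Union>C \<subseteq> L \<times> {..k}" using ext finitely_extendable_subset by blast
  moreover have "single_valued (\<Union>C)"
  proof (rule single_valuedI)
    fix x y z assume "(x, y) \<in> \<Union>C" "(x, z) \<in> \<Union>C"
    then obtain p where "p \<in> C" "(x, y) \<in> p" "(x, z) \<in> p" using chain by blast
    then show "y = z" using ext finitely_extendable_single_valued by (meson single_valuedD)
  qed
  moreover have "\<exists>c. c ` F \<subseteq> {..k} \<and> P F c \<and> (\<forall>x j. x \<in> F \<longrightarrow> (x, j) \<in> \<Union>C \<longrightarrow> c x = j)"
    if "finite F" "F \<subseteq> L" for F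
  proof -
    let ?Q = "\<Union>C \<inter> F \<times> {..k}"
    have "finite ?Q" using \<open>finite F\<close> by (meson finite_Int finite_SigmaI finite_atMost)
    moreover have "subset.chain {p. finitely_extendable P k L p} C"
      using assms(1) by (simp add: chains_alt_def)
    ultimately obtain p where "p \<in> C" "?Q \<subseteq> p"
      by (rule finite_subset_Union_chain[OF _ Int_lower1 False])
    obtain c where "c ` F \<subseteq> {..k}" "P F c" "\<And>x j. x \<in> F \<Longrightarrow> (x, j) \<in> p \<Longrightarrow> c x = j"
      using finitely_extendableD[OF ext[OF \<open>p \<in> C\<close>] \<open>finite F\<close> \<open>F \<subseteq> L\<close>] by blast
    then show ?thesis using \<open>?Q \<subseteq> p\<close> \<open>\<Union>C \<subseteq> L \<times> {..k}\<close> by blast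
  qed
  ultimately show ?thesis by (rule finitely_extendableI)
qed

text \<open>If no colour \<open>j\<close> could be assigned to \<open>x\<close>, each would be refuted by a finite set \<open>F j\<close>;
  a colouring of \<open>insert x (\<Union>j \<le> k. F j)\<close> agreeing with \<open>p\<close> refutes its own colour of \<open>x\<close>.\<close>
lemma finitely_extendable_insert:
  assumes p: "finitely_extendable P k L p" and "x \<in> L" "x \<notin> Domain p"
    and mono: "\<And>F G c. P F c \<Longrightarrow> G \<subseteq> F \<Longrightarrow> P G c"
  shows "\<exists>j. finitely_extendable P k L (insert (x, j) p)"
proof (rule ccontr)
  assume none: "\<nexists>j. finitely_extendable P k L (insert (x, j) p)"
  have "\<exists>F. finite F \<and> F \<subseteq> L \<and>
      \<not> (\<exists>c. c ` F \<subseteq> {..k} \<and> P F c \<and> (\<forall>y i. y \<in> F \<longrightarrow> (y, i) \<in> insert (x, j) p \<longrightarrow> c y = i))"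
    if "j \<le> k" for j
  proof (rule ccontr)
    assume "\<not> ?thesis"
    moreover have "insert (x, j) p \<subseteq> L \<times> {..k}"
      using finitely_extendable_subset[OF p] \<open>x \<in> L\<close> \<open>j \<le> k\<close> by blast
    moreover have "single_valued (insert (x, j) p)"
      using finitely_extendable_single_valued[OF p] \<open>x \<notin> Domain p\<close>
      unfolding single_valued_def by blast
    ultimately have "finitely_extendable P k L (insert (x, j) p)"
      by (intro finitely_extendableI) blast+
    then show False using none by blast
  qed
  then obtain F where F: "\<And>j. j \<le> k \<Longrightarrow> finite (F j) \<and> F j \<subseteq> L \<and>
      \<not> (\<exists>c. c ` F j \<subseteq> {..k} \<and> P (F j) c \<and> (\<forall>y i. y \<in> F j \<longrightarrow> (y, i) \<in> insert (x, j) p \<longrightarrow> c y = i))"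
    by metis
  let ?G = "insert x (\<Union>j \<le> k. F j)"
  have "finite ?G" "?G \<subseteq> L" using F \<open>x \<in> L\<close> by auto
  then obtain c where c: "c ` ?G \<subseteq> {..k}" "P ?G c" "\<And>y i. y \<in> ?G \<Longrightarrow> (y, i) \<in> p \<Longrightarrow> c y = i"
    using finitely_extendableD[OF p] by blast
  have "c x \<le> k" using c(1) by auto
  then have "F (c x) \<subseteq> ?G" by blast
  then have "c ` F (c x) \<subseteq> {..k}" using c(1) by (meson image_mono order_trans)
  moreover have "P (F (c x)) c" by (rule mono[OF c(2) \<open>F (c x) \<subseteq> ?G\<close>])
  moreover have "\<forall>y i. y \<in> F (c x) \<longrightarrow> (y, i) \<in> insert (x, c x) p \<longrightarrow> c y = i"
    using c(3) \<open>F (c x) \<subseteq> ?G\<close> by blast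
  ultimately show False using F[OF \<open>c x \<le> k\<close>] by blast
qed

theorem finite_character_colouring_compactness:
  fixes P :: "'a set \<Rightarrow> ('a \<Rightarrow> nat) \<Rightarrow> bool"
  assumes mono: "\<And>F G c. P F c \<Longrightarrow> G \<subseteq> F \<Longrightarrow> P G c"
    and cong: "\<And>F c c'. P F c \<Longrightarrow> (\<And>x. x \<in> F \<Longrightarrow> c' x = c x) \<Longrightarrow> P F c'"
    and finite_character: "\<And>c. (\<And>G. finite G \<Longrightarrow> G \<subseteq> L \<Longrightarrow> P G c) \<Longrightarrow> P L c"
    and finite_colourable: "\<And>F. finite F \<Longrightarrow> F \<subseteq> L \<Longrightarrow> \<exists>c. c ` F \<subseteq> {..k} \<and> P F c"
  shows "\<exists>c. c ` L \<subseteq> {..k} \<and> P L c"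
proof -
  have "finitely_extendable P k L {}"
    using finite_colourable by (intro finitely_extendableI) auto
  then have "\<forall>C \<in> chains {p. finitely_extendable P k L p}. \<Union>C \<in> {p. finitely_extendable P k L p}"
    using finitely_extendable_Union_chain by blast
  then have "\<exists>M \<in> {p. finitely_extendable P k L p}.
      \<forall>p \<in> {p. finitely_extendable P k L p}. M \<subseteq> p \<longrightarrow> p = M"
    by (rule Zorn_Lemma)
  then obtain M where M: "finitely_extendable P k L M"
    and max: "\<And>p. finitely_extendable P k L p \<Longrightarrow> M \<subseteq> p \<Longrightarrow> p = M"
    by blast
  have total: "x \<in> Domain M" if "x \<in> L" for x
  proof (rule ccontr)
    assume "x \<notin> Domain M"
    then obtain j where "finitely_extendable P k L (insert (x, j) M)"
      using finitely_extendable_insert[OF M \<open>x \<in> L\<close>] mono by blast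
    then show False using max \<open>x \<notin> Domain M\<close> by blast
  qed
  define c where "c x = (THE j. (x, j) \<in> M)" for x
  have c_M: "(x, c x) \<in> M" if "x \<in> L" for x
  proof -
    obtain j where "(x, j) \<in> M" using total[OF \<open>x \<in> L\<close>] by blast
    moreover have "single_valued M" using M by (rule finitely_extendable_single_valued)
    ultimately have "c x = j" unfolding c_def by (blast intro: the_equality dest: single_valuedD)
    then show ?thesis using \<open>(x, j) \<in> M\<close> by simp
  qed
  have "P L c"
  proof (rule finite_character)
    fix G assume "finite G" "G \<subseteq> L"
    then obtain c' where "P G c'" and agree: "\<And>x j. x \<in> G \<Longrightarrow> (x, j) \<in> M \<Longrightarrow> c' x = j"
      using finitely_extendableD[OF M] by metis
    have "c x = c' x" if "x \<in> G" for x
      using agree[OF \<open>x \<in> G\<close> c_M] \<open>G \<subseteq> L\<close> \<open>x \<in> G\<close> by auto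
    then show "P G c" by (rule cong[OF \<open>P G c'\<close>])
  qed
  moreover have "c ` L \<subseteq> {..k}" using c_M finitely_extendable_subset[OF M] by auto
  ultimately show ?thesis by blast
qed

definition finite_degree_into :: "('a \<times> 'a) set \<Rightarrow> 'a \<Rightarrow> 'a set \<Rightarrow> bool" where
  "finite_degree_into E v S \<longleftrightarrow> finite (out_nbrs E v \<inter> S) \<or> finite (in_nbrs E v \<inter> S)"

lemma finite_degree_into_subset:
  "finite_degree_into E v S \<Longrightarrow> T \<subseteq> S \<Longrightarrow> finite_degree_into E v T"
  unfolding finite_degree_into_def by (meson finite_subset inf_mono order_refl)

definition elimination_order :: "('a \<times> 'a) set \<Rightarrow> 'a set \<Rightarrow> 'a rel \<Rightarrow> bool" where
  "elimination_order E W R \<longleftrightarrow> Linear_order R \<and> Field R \<subseteq> W \<and>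
     (\<forall>v \<in> Field R. finite_degree_into E v (W - {u. (u, v) \<in> R \<and> u \<noteq> v}))"

text \<open>Since the condition only becomes weaker when predecessors are added, it survives unions of
  chains for plain inclusion, not only for end-extensions.\<close>
lemma elimination_order_Union_chain:
  assumes "C \<in> chains {R. elimination_order E W R}"
  shows "elimination_order E W (\<Union>C)"
proof -
  have orders: "\<And>R. R \<in> C \<Longrightarrow> elimination_order E W R"
    using assms by (auto dest: chainsD2)
  have "chain\<^sub>\<subseteq> C" using assms unfolding chain_subset_def by (auto dest: chainsD)
  moreover have "Linear_order R" if "R \<in> C" for R
    using orders[OF that] unfolding elimination_order_def by blast
  ultimately have "Refl (\<Union>C)" "trans (\<Union>C)" "antisym (\<Union>C)" "Total (\<Union>C)"
    using chain_subset_trans_Union chain_subset_antisym_Union chain_subset_Total_Union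
    unfolding order_on_defs refl_on_def by (fastforce, blast+)
  then have "Linear_order (\<Union>C)"
    unfolding order_on_defs by (auto simp: Field_def)
  moreover have "finite_degree_into E v (W - {u. (u, v) \<in> \<Union>C \<and> u \<noteq> v})"
    if "v \<in> Field (\<Union>C)" for v
  proof -
    obtain R where "R \<in> C" "v \<in> Field R" using \<open>v \<in> Field (\<Union>C)\<close> by auto
    then have "finite_degree_into E v (W - {u. (u, v) \<in> R \<and> u \<noteq> v})"
      using orders unfolding elimination_order_def by blast
    then show ?thesis by (rule finite_degree_into_subset) (use \<open>R \<in> C\<close> in blast)
  qed
  moreover have "Field (\<Union>C) \<subseteq> W" using orders unfolding elimination_order_def by auto
  ultimately show ?thesis unfolding elimination_order_def by blast
qed

lemma Linear_order_insert_top: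
  assumes "Linear_order R" "u \<notin> Field R"
  shows "Linear_order (R \<union> insert u (Field R) \<times> {u})" (is "Linear_order ?R")
proof -
  have field: "Field ?R = insert u (Field R)" unfolding Field_def by blast
  have R: "refl_on (Field R) R" "trans R" "antisym R" "total_on (Field R) R"
    using assms(1) unfolding order_on_defs by blast+
  have "refl_on (Field ?R) ?R" using R(1) unfolding field refl_on_def by blast
  moreover have "trans ?R"
    using R(2) assms(2) unfolding trans_def by (blast intro: FieldI1 FieldI2)
  moreover have "antisym ?R"
    using R(3) assms(2) unfolding antisym_def by (blast intro: FieldI1 FieldI2)
  moreover have "total_on (Field ?R) ?R" using R(4) unfolding field total_on_def by blast
  moreover have "?R \<subseteq> Field ?R \<times> Field ?R" by (auto intro: FieldI1 FieldI2)
  ultimately show ?thesis unfolding order_on_defs by blast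
qed

lemma elimination_order_extend:
  assumes "elimination_order E W R" "u \<in> W - Field R" "finite_degree_into E u (W - Field R)"
  shows "elimination_order E W (R \<union> insert u (Field R) \<times> {u})"
    (is "elimination_order E W ?R")
proof -
  have lin: "Linear_order R" and "Field R \<subseteq> W"
    and old: "\<And>v. v \<in> Field R \<Longrightarrow> finite_degree_into E v (W - {w. (w, v) \<in> R \<and> w \<noteq> v})"
    using assms(1) unfolding elimination_order_def by blast+
  have field: "Field ?R = insert u (Field R)" unfolding Field_def by blast
  have "Linear_order ?R"
    using Linear_order_insert_top[OF lin] \<open>u \<in> W - Field R\<close> by blast
  moreover have "finite_degree_into E v (W - {w. (w, v) \<in> ?R \<and> w \<noteq> v})" if "v \<in> Field ?R" for v
  proof (cases "v = u")
    case True
    have "W - {w. (w, v) \<in> ?R \<and> w \<noteq> v} = W - Field R"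
      using True \<open>u \<in> W - Field R\<close> by (auto simp: Field_def)
    then show ?thesis using assms(3) True by simp
  next
    case False
    then have "v \<in> Field R" using that field by blast
    then show ?thesis by (rule finite_degree_into_subset[OF old]) blast
  qed
  moreover have "Field ?R \<subseteq> W" unfolding field using \<open>Field R \<subseteq> W\<close> \<open>u \<in> W - Field R\<close> by blast
  ultimately show ?thesis unfolding elimination_order_def by blast
qed

theorem elimination_order_exists:
  assumes "\<And>S. S \<subseteq> W \<Longrightarrow> S \<noteq> {} \<Longrightarrow> \<exists>u\<in>S. finite_degree_into E u S"
  shows "\<exists>R. linear_order_on W R \<and> (\<forall>v\<in>W. finite_degree_into E v (R `` {v}))"
proof -
  have "\<exists>M \<in> {R. elimination_order E W R}. \<forall>R \<in> {R. elimination_order E W R}. M \<subseteq> R \<longrightarrow> R = M"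
    using elimination_order_Union_chain by (intro Zorn_Lemma) blast
  then obtain M where M: "elimination_order E W M"
    and max: "\<And>R. elimination_order E W R \<Longrightarrow> M \<subseteq> R \<Longrightarrow> R = M"
    by blast
  have "Field M = W"
  proof (rule ccontr)
    assume "Field M \<noteq> W"
    then have "W - Field M \<noteq> {}" using M unfolding elimination_order_def by blast
    then obtain u where "u \<in> W - Field M" "finite_degree_into E u (W - Field M)"
      using assms[of "W - Field M"] by blast
    then have "elimination_order E W (M \<union> insert u (Field M) \<times> {u})"
      by (rule elimination_order_extend[OF M])
    then have "M \<union> insert u (Field M) \<times> {u} = M" using max by blast
    then show False using \<open>u \<in> W - Field M\<close> by (auto simp: Field_def)
  qed
  then have lin: "linear_order_on W M" using M unfolding elimination_order_def by simp
  have "finite_degree_into E v (M `` {v})" if "v \<in> W" for v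
  proof -
    have "finite_degree_into E v (W - {u. (u, v) \<in> M \<and> u \<noteq> v})"
      using M \<open>Field M = W\<close> \<open>v \<in> W\<close> unfolding elimination_order_def by blast
    moreover have "M `` {v} \<subseteq> W - {u. (u, v) \<in> M \<and> u \<noteq> v}"
      using lin unfolding order_on_defs antisym_def by blast
    ultimately show ?thesis by (rule finite_degree_into_subset)
  qed
  then show ?thesis using lin by blast
qed

lemma linear_order_on_finite_has_least:
  assumes "linear_order_on A R" "finite G" "G \<noteq> {}" "G \<subseteq> A"
  shows "\<exists>v\<in>G. G \<subseteq> R `` {v}"
proof -
  have refl: "\<And>a. a \<in> A \<Longrightarrow> (a, a) \<in> R" and "trans R" and "total_on A R"
    using assms(1) unfolding order_on_defs refl_on_def by blast+
  show ?thesis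
    using assms(2-4)
  proof (induction G rule: finite_ne_induct)
    case (singleton x)
    then show ?case using refl by blast
  next
    case (insert x G)
    then have "x \<in> A" "G \<subseteq> A" by simp_all
    obtain v where "v \<in> G" "G \<subseteq> R `` {v}" using insert.IH[OF \<open>G \<subseteq> A\<close>] by blast
    have "x \<noteq> v" using \<open>v \<in> G\<close> \<open>x \<notin> G\<close> by blast
    then consider "(v, x) \<in> R" | "(x, v) \<in> R"
      using \<open>total_on A R\<close> \<open>x \<in> A\<close> \<open>v \<in> G\<close> \<open>G \<subseteq> A\<close> unfolding total_on_def by blast
    then show ?case
    proof cases
      case 1
      then show ?thesis using \<open>v \<in> G\<close> \<open>G \<subseteq> R `` {v}\<close> by blast
    next
      case 2
      then have "G \<subseteq> R `` {x}" using \<open>G \<subseteq> R `` {v}\<close> \<open>trans R\<close> by (blast dest: transD)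
      then show ?thesis using refl[OF \<open>x \<in> A\<close>] by blast
    qed
  qed
qed

lemma acyclic_set_induced:
  "acyclic_set A (E \<inter> A \<times> A) X \<longleftrightarrow> X \<subseteq> A \<and> acyclic (E \<inter> X \<times> X)"
proof -
  have "X \<subseteq> A \<Longrightarrow> E \<inter> A \<times> A \<inter> X \<times> X = E \<inter> X \<times> X" by blast
  then show ?thesis unfolding acyclic_set_def by auto
qed

lemma dichromatic_le_omega_Un:
  assumes "dichromatic_le_omega A (E \<inter> A \<times> A)" "dichromatic_le_omega B (E \<inter> B \<times> B)"
  shows "dichromatic_le_omega (A \<union> B) (E \<inter> (A \<union> B) \<times> (A \<union> B))"
proof -
  obtain CA CB where "countable CA" "\<forall>X\<in>CA. X \<subseteq> A \<and> acyclic (E \<inter> X \<times> X)" "A \<subseteq> \<Union>CA"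
    and "countable CB" "\<forall>X\<in>CB. X \<subseteq> B \<and> acyclic (E \<inter> X \<times> X)" "B \<subseteq> \<Union>CB"
    using assms unfolding dichromatic_le_omega_def acyclic_set_induced by meson
  then have "countable (CA \<union> CB)" "\<forall>X\<in>CA \<union> CB. X \<subseteq> A \<union> B \<and> acyclic (E \<inter> X \<times> X)"
    "A \<union> B \<subseteq> \<Union>(CA \<union> CB)"
    by blast+
  then show ?thesis unfolding dichromatic_le_omega_def acyclic_set_induced by blast
qed

lemma dichromatic_le_omega_converse:
  "dichromatic_le_omega V (E\<inverse>) \<longleftrightarrow> dichromatic_le_omega V E"
proof -
  have "E\<inverse> \<inter> A \<times> A = (E \<inter> A \<times> A)\<inverse>" for A by blast
  then show ?thesis unfolding dichromatic_le_omega_def acyclic_set_def by simp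
qed

lemma out_nbrs_converse: "out_nbrs (E\<inverse>) v = in_nbrs E v"
  by (simp add: in_nbrs_def out_nbrs_def)

lemma dichromatic_le_omega_if_finite_later_out_nbrs:
  assumes loopfree: "\<And>v. (v, v) \<notin> E" and R: "linear_order_on W R" and "L \<subseteq> W"
    and later: "\<And>v. v \<in> L \<Longrightarrow> finite (out_nbrs E v \<inter> R `` {v})"
  shows "dichromatic_le_omega L (E \<inter> L \<times> L)"
proof -
  define layer where "layer k = {v \<in> L. card (out_nbrs E v \<inter> R `` {v}) \<le> k}" for k
  have "\<exists>c. c ` layer k \<subseteq> {..k} \<and> acyclic_colouring E (layer k) c" for k
  proof (rule finite_character_colouring_compactness)
    fix F assume "finite F" "F \<subseteq> layer k"
    show "\<exists>c. c ` F \<subseteq> {..k} \<and> acyclic_colouring E F c"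
    proof (rule degenerate_acyclic_colouring[OF loopfree \<open>finite F\<close>])
      fix G assume "G \<subseteq> F" "G \<noteq> {}"
      moreover have "G \<subseteq> W" using \<open>G \<subseteq> F\<close> \<open>F \<subseteq> layer k\<close> \<open>L \<subseteq> W\<close> unfolding layer_def by blast
      ultimately obtain v where "v \<in> G" "G \<subseteq> R `` {v}"
        using linear_order_on_finite_has_least[OF R] finite_subset[OF _ \<open>finite F\<close>] by metis
      then have "v \<in> layer k" using \<open>G \<subseteq> F\<close> \<open>F \<subseteq> layer k\<close> by blast
      have "card (out_nbrs E v \<inter> G) \<le> card (out_nbrs E v \<inter> R `` {v})"
        using \<open>G \<subseteq> R `` {v}\<close> later \<open>v \<in> layer k\<close> unfolding layer_def
        by (intro card_mono) blast+
      also have "\<dots> \<le> k" using \<open>v \<in> layer k\<close> unfolding layer_def by blast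
      finally show "\<exists>v\<in>G. card (out_nbrs E v \<inter> G) \<le> k" using \<open>v \<in> G\<close> by blast
    qed
  qed (fact acyclic_colouring_subset acyclic_colouring_cong acyclic_colouring_finite_character)+
  then obtain c where c: "\<And>k. acyclic_colouring E (layer k) (c k)" by metis
  define C where "C = (\<lambda>(k, j). {x \<in> layer k. c k x = j}) ` UNIV"
  have "countable C" unfolding C_def by simp
  moreover have "\<forall>X\<in>C. acyclic_set L (E \<inter> L \<times> L) X"
    using c unfolding C_def layer_def acyclic_colouring_def acyclic_set_induced by auto
  moreover have "L \<subseteq> \<Union>C"
  proof
    fix v assume "v \<in> L"
    let ?k = "card (out_nbrs E v \<inter> R `` {v})"
    have "v \<in> {x \<in> layer ?k. c ?k x = c ?k v}" using \<open>v \<in> L\<close> unfolding layer_def by simp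
    moreover have "{x \<in> layer ?k. c ?k x = c ?k v} \<in> C"
      unfolding C_def by (rule image_eqI[where x = "(?k, c ?k v)"]) simp_all
    ultimately show "v \<in> \<Union>C" by (rule UnionI[rotated])
  qed
  ultimately show ?thesis unfolding dichromatic_le_omega_def by blast
qed

theorem dichromatic_le_omega_if_hereditarily_finite_degree:
  assumes loopfree: "\<And>v. (v, v) \<notin> E"
    and "\<And>S. S \<subseteq> W \<Longrightarrow> S \<noteq> {} \<Longrightarrow> \<exists>u\<in>S. finite_degree_into E u S"
  shows "dichromatic_le_omega W (E \<inter> W \<times> W)"
proof -
  obtain R where R: "linear_order_on W R" and fin: "\<And>v. v \<in> W \<Longrightarrow> finite_degree_into E v (R `` {v})"
    using elimination_order_exists[OF assms(2)] by blast
  define Lout where "Lout = {v \<in> W. finite (out_nbrs E v \<inter> R `` {v})}"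
  define Lin where "Lin = {v \<in> W. finite (in_nbrs E v \<inter> R `` {v})}"
  have out: "dichromatic_le_omega Lout (E \<inter> Lout \<times> Lout)"
    by (rule dichromatic_le_omega_if_finite_later_out_nbrs[OF loopfree R]) (auto simp: Lout_def)
  have "dichromatic_le_omega Lin (E\<inverse> \<inter> Lin \<times> Lin)"
    by (rule dichromatic_le_omega_if_finite_later_out_nbrs[OF _ R])
      (auto simp: Lin_def out_nbrs_converse loopfree)
  then have "dichromatic_le_omega Lin (E \<inter> Lin \<times> Lin)"
    using dichromatic_le_omega_converse[of Lin "E \<inter> Lin \<times> Lin"]
    by (simp add: converse_Int converse_Times)
  moreover have "Lout \<union> Lin = W" using fin unfolding Lout_def Lin_def finite_degree_into_def by blast
  ultimately show ?thesis using dichromatic_le_omega_Un[OF out] by metis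
qed

definition infinite_semidegrees :: "('a \<times> 'a) set \<Rightarrow> 'a set \<Rightarrow> bool" where
  "infinite_semidegrees E S \<longleftrightarrow> (\<forall>v\<in>S. infinite (in_nbrs E v \<inter> S) \<and> infinite (out_nbrs E v \<inter> S))"

lemma infinite_semidegrees_Union:
  assumes "\<And>S. S \<in> \<S> \<Longrightarrow> infinite_semidegrees E S"
  shows "infinite_semidegrees E (\<Union>\<S>)"
  unfolding infinite_semidegrees_def
proof
  fix v assume "v \<in> \<Union>\<S>"
  then obtain S where "S \<in> \<S>" "v \<in> S" by blast
  then have "infinite (in_nbrs E v \<inter> S)" "infinite (out_nbrs E v \<inter> S)"
    using assms unfolding infinite_semidegrees_def by blast+
  moreover have "in_nbrs E v \<inter> S \<subseteq> in_nbrs E v \<inter> \<Union>\<S>" "out_nbrs E v \<inter> S \<subseteq> out_nbrs E v \<inter> \<Union>\<S>"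
    using \<open>S \<in> \<S>\<close> by blast+
  ultimately show "infinite (in_nbrs E v \<inter> \<Union>\<S>) \<and> infinite (out_nbrs E v \<inter> \<Union>\<S>)"
    using finite_subset by blast
qed

lemma in_nbrs_induced: "v \<in> S \<Longrightarrow> in_nbrs (E \<inter> S \<times> S) v = in_nbrs E v \<inter> S"
  unfolding in_nbrs_def by blast

lemma out_nbrs_induced: "v \<in> S \<Longrightarrow> out_nbrs (E \<inter> S \<times> S) v = out_nbrs E v \<inter> S"
  unfolding out_nbrs_def by blast

lemma subdigraph_induced: "digraph V E \<Longrightarrow> S \<subseteq> V \<Longrightarrow> subdigraph S (E \<inter> S \<times> S) V E"
  unfolding subdigraph_def digraph_def by blast

lemma not_dichromatic_le_omega_if_complement:
  assumes "digraph V E" "\<not> dichromatic_le_omega V E" "S \<subseteq> V"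
    and "dichromatic_le_omega (V - S) (E \<inter> (V - S) \<times> (V - S))"
  shows "\<not> dichromatic_le_omega S (E \<inter> S \<times> S)"
proof
  assume "dichromatic_le_omega S (E \<inter> S \<times> S)"
  then have "dichromatic_le_omega (S \<union> (V - S)) (E \<inter> (S \<union> (V - S)) \<times> (S \<union> (V - S)))"
    using assms(4) by (rule dichromatic_le_omega_Un)
  moreover have "S \<union> (V - S) = V" using \<open>S \<subseteq> V\<close> by blast
  moreover have "E \<inter> V \<times> V = E" using assms(1) unfolding digraph_def by blast
  ultimately show False using assms(2) by simp
qed

theorem proposition3p1:
  fixes V :: "'a set" and E :: "('a \<times> 'a) set"
  assumes "digraph V E"
    and "\<not> dichromatic_le_omega V E"
  shows "\<exists>V0 E0. subdigraph V0 E0 V E \<and> \<not> dichromatic_le_omega V0 E0 \<and>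
           (\<forall>v\<in>V0. infinite (in_nbrs E0 v) \<and> infinite (out_nbrs E0 v))"
proof -
  define V0 where "V0 = \<Union>{S. S \<subseteq> V \<and> infinite_semidegrees E S}"
  have "V0 \<subseteq> V" and core: "infinite_semidegrees E V0"
    unfolding V0_def by (auto intro: infinite_semidegrees_Union)
  have "dichromatic_le_omega (V - V0) (E \<inter> (V - V0) \<times> (V - V0))"
  proof (rule dichromatic_le_omega_if_hereditarily_finite_degree)
    show "(v, v) \<notin> E" for v using assms(1) unfolding digraph_def by blast
    fix S assume "S \<subseteq> V - V0" "S \<noteq> {}"
    then have "\<not> infinite_semidegrees E S" unfolding V0_def by blast
    then show "\<exists>u\<in>S. finite_degree_into E u S"
      unfolding infinite_semidegrees_def finite_degree_into_def by blast
  qed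
  then have "\<not> dichromatic_le_omega V0 (E \<inter> V0 \<times> V0)"
    using not_dichromatic_le_omega_if_complement[OF assms \<open>V0 \<subseteq> V\<close>] by blast
  moreover have "\<forall>v\<in>V0. infinite (in_nbrs (E \<inter> V0 \<times> V0) v) \<and> infinite (out_nbrs (E \<inter> V0 \<times> V0) v)"
    using core unfolding infinite_semidegrees_def by (simp add: in_nbrs_induced out_nbrs_induced)
  ultimately show ?thesis using subdigraph_induced[OF assms(1) \<open>V0 \<subseteq> V\<close>] by blast
qed

end
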